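(* A finite simple graph $G$ is $(2,2)$-tight if and only if it can be obtained from $K_1$ by sequential application of moves of four types, namely the Henneberg 1 move, the Henneberg 2 move, the vertex-to-$K_4$ move and the vertex-to-$4$-cycle move.
   Context: A graph $G=(V,E)$ is $(2,k)$-sparse if every subgraph $H$ with at least one edge satisfies $|E(H)|\le 2|V(H)|-k$, and $(2,k)$-tight if it is $(2,k)$-sparse and $|E|=2|V|-k$. Moves on a simple graph $G$: Henneberg 1: add a new vertex $v$ and two edges $vv_1,vv_2$ to distinct existing vertices $v_1,v_2$. Henneberg 2: remove an edge $v_1v_2$ and add a new vertex $v$ with edges $vv_1,vv_2,vv_3$ to distinct vertices $v_1,v_2,v_3$ for some existing $v_3$. Vertex-to-$K_4$: replace a vertex $v$ by a copy of $K_4$ on four new vertices, each edge $xv$ being replaced by an edge $xw$ for some (arbitrarily chosen) vertex $w$ of the $K_4$. Vertex-to-$4$-cycle: for a vertex $v_1$ with distinct neighbours $v_2,v_3$, add a new vertex $v_0$ and edges $v_0v_2,v_0v_3$, and replace each other edge $xv_1$ ($x\ne v_2,v_3$) either by keeping it or by replacing it with $xv_0$. *)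

theory Defs
  imports Main
begin

definition simple_graph :: "'a set \<Rightarrow> 'a set set \<Rightarrow> bool" where
  "simple_graph V E \<longleftrightarrow> finite V \<and> (\<forall>e\<in>E. e \<subseteq> V \<and> card e = 2)"

definition sparse :: "nat \<Rightarrow> int \<Rightarrow> 'a set \<Rightarrow> 'a set set \<Rightarrow> bool" where
  "sparse a k V E \<longleftrightarrow>
     (\<forall>V' E'. V' \<subseteq> V \<and> E' \<subseteq> E \<and> (\<forall>e\<in>E'. e \<subseteq> V') \<and> E' \<noteq> {}
        \<longrightarrow> int (card E') \<le> int a * int (card V') - k)"

definition tight :: "nat \<Rightarrow> int \<Rightarrow> 'a set \<Rightarrow> 'a set set \<Rightarrow> bool" where
  "tight a k V E \<longleftrightarrow> sparse a k V E \<and> int (card E) = int a * int (card V) - k"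

definition nbrs :: "'a set set \<Rightarrow> 'a \<Rightarrow> 'a set" where
  "nbrs E v = {x. {x, v} \<in> E}"

inductive constructible :: "'a set \<Rightarrow> 'a set set \<Rightarrow> bool" where
  K1: "constructible {v} {}"
| henneberg1:
    "\<lbrakk> constructible V E; v \<notin> V; v1 \<in> V; v2 \<in> V; v1 \<noteq> v2 \<rbrakk>
     \<Longrightarrow> constructible (insert v V) (E \<union> {{v, v1}, {v, v2}})"
| henneberg2:
    "\<lbrakk> constructible V E; v \<notin> V; {v1, v2} \<in> E; v3 \<in> V;
       v1 \<noteq> v2; v1 \<noteq> v3; v2 \<noteq> v3 \<rbrakk>
     \<Longrightarrow> constructible (insert v V) ((E - {{v1, v2}}) \<union> {{v, v1}, {v, v2}, {v, v3}})"
| vertex_to_K4: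
    "\<lbrakk> constructible V E; v \<in> V; W \<inter> V = {}; card W = 4;
       \<forall>x\<in>nbrs E v. f x \<in> W \<rbrakk>
     \<Longrightarrow> constructible ((V - {v}) \<union> W)
           ({e\<in>E. v \<notin> e} \<union> {{w, w'} | w w'. w \<in> W \<and> w' \<in> W \<and> w \<noteq> w'}
              \<union> {{x, f x} | x. x \<in> nbrs E v})"
| vertex_to_4cycle:
    "\<lbrakk> constructible V E; v1 \<in> V; v2 \<in> nbrs E v1; v3 \<in> nbrs E v1; v2 \<noteq> v3;
       v0 \<notin> V; S \<subseteq> nbrs E v1 - {v2, v3} \<rbrakk>
     \<Longrightarrow> constructible (insert v0 V)
           ((E - {{x, v1} | x. x \<in> S}) \<union> {{x, v0} | x. x \<in> S} \<union> {{v0, v2}, {v0, v3}})"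

end

theory Submission
  imports Defs
begin

text \<open>Each move preserves (2,2)-sparsity and the count \<open>|E| = 2|V| - 2\<close>; only vertex sets
  through the new vertices need checking. A tight graph with at
  least two vertices has minimum degree 2 and, by counting degrees, a vertex \<open>u\<close> of degree 2 or 3.
  Degree 2 reverses a Henneberg 1 move. For degree 3, deleting \<open>u\<close> and adding a missing edge
  \<open>pq\<close> between two of its neighbours reverses a Henneberg 2 move, unless \<open>p, q\<close> lie in a tight set
  avoiding \<open>u\<close>. Since intersecting tight sets have tight unions, if every missing edge is
  blocked in this way, the neighbours \<open>p, q, r\<close> span a triangle and \<open>u, p, q, r\<close> span a tight
  \<open>K\<^sub>4\<close>. If no outside vertex has two neighbours in this \<open>K\<^sub>4\<close>, contracting it reverses a
  vertex-to-\<open>K\<^sub>4\<close> move; otherwise such a vertex \<open>x\<close> is adjacent to exactly two of them,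
  say \<open>p, q\<close>, and deleting \<open>u\<close> while adding \<open>rx\<close> reverses a vertex-to-4-cycle move.\<close>

section \<open>Sparsity and tight sets\<close>

definition induced_edges :: "'a set set \<Rightarrow> 'a set \<Rightarrow> 'a set set" where
  "induced_edges E X = {e\<in>E. e \<subseteq> X}"

definition sparse22 :: "'a set \<Rightarrow> 'a set set \<Rightarrow> bool" where
  "sparse22 V E \<longleftrightarrow>
     (\<forall>X. X \<subseteq> V \<and> X \<noteq> {} \<longrightarrow> int (card (induced_edges E X)) \<le> 2 * int (card X) - 2)"

definition tight_graph :: "'a set \<Rightarrow> 'a set set \<Rightarrow> bool" where
  "tight_graph V E \<longleftrightarrow>
     simple_graph V E \<and> sparse22 V E \<and> int (card E) = 2 * int (card V) - 2"

definition tight_set :: "'a set \<Rightarrow> 'a set set \<Rightarrow> 'a set \<Rightarrow> bool" where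
  "tight_set V E X \<longleftrightarrow>
     X \<subseteq> V \<and> X \<noteq> {} \<and> int (card (induced_edges E X)) = 2 * int (card X) - 2"

lemma card_doubleton_le: "card {a, b} \<le> 2"
  by (simp add: card_insert_le_m1)

lemma card_triple_le: "card {a, b, c} \<le> 3"
  by (simp add: card_insert_le_m1)

lemma simple_graph_finite: "simple_graph V E \<Longrightarrow> finite V"
  unfolding simple_graph_def by blast

lemma simple_graph_finite_edges: "simple_graph V E \<Longrightarrow> finite E"
  unfolding simple_graph_def by (meson PowI finite_Pow_iff rev_finite_subset subsetI)

lemma simple_graph_edges_subset: "simple_graph V E \<Longrightarrow> \<forall>e\<in>E. e \<subseteq> V"
  unfolding simple_graph_def by blast

lemma simple_graph_edgeE:
  assumes "simple_graph V E" "e \<in> E"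
  obtains x y where "e = {x, y}" "x \<noteq> y" "x \<in> V" "y \<in> V"
  using assms unfolding simple_graph_def by (metis card_2_iff insert_subset)

lemma simple_graph_adjacent:
  "simple_graph V E \<Longrightarrow> {x, y} \<in> E \<Longrightarrow> x \<noteq> y \<and> x \<in> V \<and> y \<in> V"
  unfolding simple_graph_def by (force simp: card_insert_if split: if_splits)

lemma in_nbrs_iff: "y \<in> nbrs E x \<longleftrightarrow> {x, y} \<in> E"
  unfolding nbrs_def by (simp add: insert_commute)

lemma nbrs_subset: "simple_graph V E \<Longrightarrow> nbrs E v \<subseteq> V"
  unfolding nbrs_def simple_graph_def by auto

lemma not_in_nbrs_self: "simple_graph V E \<Longrightarrow> v \<notin> nbrs E v"
  unfolding nbrs_def simple_graph_def by force

lemma edges_at_vertex: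
  assumes "simple_graph V E"
  shows "{e\<in>E. v \<in> e} = (\<lambda>x. {v, x}) ` nbrs E v"
proof
  show "{e\<in>E. v \<in> e} \<subseteq> (\<lambda>x. {v, x}) ` nbrs E v"
  proof
    fix e assume e: "e \<in> {e\<in>E. v \<in> e}"
    then obtain x y where "e = {x, y}" using simple_graph_edgeE[OF assms] by blast
    with e show "e \<in> (\<lambda>x. {v, x}) ` nbrs E v"
      unfolding nbrs_def by (auto simp: insert_commute)
  qed
qed (auto simp: nbrs_def insert_commute)

lemma inj_on_doubleton: "v \<notin> N \<Longrightarrow> inj_on (\<lambda>x. {x, v}) N"
  unfolding inj_on_def by (metis doubleton_eq_iff)

lemma card_edges_at_vertex:
  assumes "simple_graph V E"
  shows "card {e\<in>E. v \<in> e} = card (nbrs E v)"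
proof -
  have "inj_on (\<lambda>x. {v, x}) (nbrs E v)"
    using inj_on_doubleton[OF not_in_nbrs_self[OF assms]] by (simp add: inj_on_def insert_commute)
  thus ?thesis using edges_at_vertex[OF assms] card_image by metis
qed

lemma card_edges_split_vertex:
  assumes "simple_graph V E"
  shows "card E = card {e\<in>E. v \<notin> e} + card (nbrs E v)"
proof -
  have "finite E" by (rule simple_graph_finite_edges[OF assms])
  hence "card ({e\<in>E. v \<notin> e} \<union> {e\<in>E. v \<in> e}) = card {e\<in>E. v \<notin> e} + card {e\<in>E. v \<in> e}"
    by (intro card_Un_disjoint) auto
  moreover have "{e\<in>E. v \<notin> e} \<union> {e\<in>E. v \<in> e} = E" by auto
  ultimately have "card E = card {e\<in>E. v \<notin> e} + card {e\<in>E. v \<in> e}" by simp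
  thus ?thesis using card_edges_at_vertex[OF assms] by simp
qed

lemma sum_degrees:
  assumes G: "simple_graph V E"
  shows "(\<Sum>u\<in>V. card (nbrs E u)) = 2 * card E"
proof -
  have fV: "finite V" and fE: "finite E"
    using G simple_graph_finite simple_graph_finite_edges by auto
  have "card (nbrs E u) = (\<Sum>e\<in>E. if u \<in> e then 1 else 0)" for u
  proof -
    have "card (nbrs E u) = (\<Sum>e\<in>{e\<in>E. u \<in> e}. 1)"
      unfolding card_edges_at_vertex[OF G, symmetric] by (rule card_eq_sum)
    also have "\<dots> = (\<Sum>e\<in>E. if u \<in> e then 1 else 0)" by (rule sum.inter_filter[OF fE])
    finally show ?thesis .
  qed
  hence "(\<Sum>u\<in>V. card (nbrs E u)) = (\<Sum>u\<in>V. \<Sum>e\<in>E. if u \<in> e then 1 else 0)"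
    by simp
  also have "\<dots> = (\<Sum>e\<in>E. \<Sum>u\<in>V. if u \<in> e then 1 else 0)"
    by (rule sum.swap)
  also have "\<dots> = (\<Sum>e\<in>E. 2)"
  proof (rule sum.cong[OF refl])
    fix e assume e: "e \<in> E"
    hence "{u\<in>V. u \<in> e} = e" using simple_graph_edges_subset[OF G] by auto
    thus "(\<Sum>u\<in>V. if u \<in> e then 1 else 0) = (2::nat)"
      using e G unfolding simple_graph_def by (simp add: sum.inter_filter[OF fV, symmetric])
  qed
  finally show ?thesis by simp
qed

lemma finite_induced_edges: "finite E \<Longrightarrow> finite (induced_edges E X)"
  unfolding induced_edges_def by simp

lemma induced_edges_all: "simple_graph V E \<Longrightarrow> induced_edges E V = E"
  unfolding induced_edges_def simple_graph_def by auto

lemma induced_edges_singleton: "simple_graph V E \<Longrightarrow> induced_edges E {v} = {}"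
  unfolding induced_edges_def simple_graph_def by (auto dest!: subset_singletonD)

lemma card_induced_edges_insert:
  assumes "finite E" "w \<notin> X" "N \<subseteq> X" "finite N" "\<forall>y\<in>N. {w, y} \<in> E"
  shows "card (induced_edges E X) + card N \<le> card (induced_edges E (insert w X))"
proof -
  have "inj_on (\<lambda>y. {y, w}) N" by (rule inj_on_doubleton) (use assms in auto)
  hence "inj_on (\<lambda>y. {w, y}) N" by (simp add: inj_on_def insert_commute)
  moreover have "induced_edges E X \<inter> (\<lambda>y. {w, y}) ` N = {}"
    using assms unfolding induced_edges_def by auto
  ultimately have "card (induced_edges E X \<union> (\<lambda>y. {w, y}) ` N) = card (induced_edges E X) + card N"
    using assms by (simp add: card_Un_disjoint finite_induced_edges card_image)
  moreover have "induced_edges E X \<union> (\<lambda>y. {w, y}) ` N \<subseteq> induced_edges E (insert w X)"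
    using assms unfolding induced_edges_def by auto
  ultimately show ?thesis
    by (metis assms(1) card_mono finite_induced_edges)
qed

lemma sparse22D:
  "sparse22 V E \<Longrightarrow> X \<subseteq> V \<Longrightarrow> X \<noteq> {} \<Longrightarrow>
     int (card (induced_edges E X)) \<le> 2 * int (card X) - 2"
  unfolding sparse22_def by blast

lemma sparse22_iff:
  assumes G: "simple_graph V E"
  shows "sparse 2 2 V E \<longleftrightarrow> sparse22 V E"
proof
  assume s: "sparse 2 2 V E"
  show "sparse22 V E" unfolding sparse22_def
  proof (intro allI impI)
    fix X assume X: "X \<subseteq> V \<and> X \<noteq> {}"
    hence "card X \<ge> 1"
      using G by (meson card_0_eq finite_subset less_one not_le simple_graph_finite)
    moreover have "induced_edges E X \<noteq> {} \<Longrightarrow>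
        int (card (induced_edges E X)) \<le> int 2 * int (card X) - 2"
      using s[unfolded sparse_def, rule_format, of X "induced_edges E X"] X
      by (auto simp: induced_edges_def)
    ultimately show "int (card (induced_edges E X)) \<le> 2 * int (card X) - 2"
      by (cases "induced_edges E X = {}") auto
  qed
next
  assume s: "sparse22 V E"
  show "sparse 2 2 V E" unfolding sparse_def
  proof (intro allI impI)
    fix V' E' assume h: "V' \<subseteq> V \<and> E' \<subseteq> E \<and> (\<forall>e\<in>E'. e \<subseteq> V') \<and> E' \<noteq> {}"
    then obtain e where e: "e \<in> E'" by blast
    hence "e \<noteq> {}" using h G unfolding simple_graph_def by fastforce
    hence "V' \<noteq> {}" using h e by blast
    hence "int (card (induced_edges E V')) \<le> 2 * int (card V') - 2"
      using sparse22D[OF s] h by blast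
    moreover have "E' \<subseteq> induced_edges E V'" using h by (auto simp: induced_edges_def)
    hence "card E' \<le> card (induced_edges E V')"
      by (rule card_mono[OF finite_induced_edges[OF simple_graph_finite_edges[OF G]]])
    ultimately show "int (card E') \<le> int 2 * int (card V') - 2" by simp
  qed
qed

lemma tight_22_iff: "simple_graph V E \<Longrightarrow> tight 2 2 V E \<longleftrightarrow> tight_graph V E"
  unfolding tight_def tight_graph_def by (simp add: sparse22_iff)

lemma sparse22_subgraph:
  assumes "finite E" "sparse22 V E" "V' \<subseteq> V" "E' \<subseteq> E"
  shows "sparse22 V' E'"
  unfolding sparse22_def
proof (intro allI impI)
  fix X assume X: "X \<subseteq> V' \<and> X \<noteq> {}"
  have "card (induced_edges E' X) \<le> card (induced_edges E X)"
    using assms by (intro card_mono finite_induced_edges) (auto simp: induced_edges_def)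
  thus "int (card (induced_edges E' X)) \<le> 2 * int (card X) - 2"
    using sparse22D[OF assms(2), of X] X assms(3) by force
qed

lemma tight_set_Un:
  assumes G: "simple_graph V E" and s: "sparse22 V E"
    and X: "tight_set V E X" and Y: "tight_set V E Y" and XY: "X \<inter> Y \<noteq> {}"
  shows "tight_set V E (X \<union> Y)"
proof -
  have fE: "finite E" and fV: "finite V"
    using G simple_graph_finite simple_graph_finite_edges by auto
  have sub: "X \<subseteq> V" "Y \<subseteq> V" using X Y unfolding tight_set_def by auto
  hence fXY: "finite X" "finite Y" using fV finite_subset by auto
  have "card (induced_edges E X \<union> induced_edges E Y) \<le> card (induced_edges E (X \<union> Y))"
    by (intro card_mono finite_induced_edges fE) (auto simp: induced_edges_def)
  moreover have "card (induced_edges E X \<union> induced_edges E Y) + card (induced_edges E (X \<inter> Y))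
      = card (induced_edges E X) + card (induced_edges E Y)"
  proof -
    have "induced_edges E X \<inter> induced_edges E Y = induced_edges E (X \<inter> Y)"
      unfolding induced_edges_def by auto
    thus ?thesis using card_Un_Int[OF finite_induced_edges finite_induced_edges, OF fE fE] by simp
  qed
  moreover have "card (X \<union> Y) + card (X \<inter> Y) = card X + card Y"
    using card_Un_Int[OF fXY] by linarith
  moreover have "int (card (induced_edges E (X \<inter> Y))) \<le> 2 * int (card (X \<inter> Y)) - 2"
    by (rule sparse22D[OF s]) (use sub XY in auto)
  moreover have "int (card (induced_edges E (X \<union> Y))) \<le> 2 * int (card (X \<union> Y)) - 2"
    by (rule sparse22D[OF s]) (use sub X in \<open>auto simp: tight_set_def\<close>)
  ultimately have "int (card (induced_edges E (X \<union> Y))) = 2 * int (card (X \<union> Y)) - 2"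
    using X Y unfolding tight_set_def by linarith
  thus ?thesis using sub X unfolding tight_set_def by auto
qed

section \<open>The moves preserve tightness\<close>

lemma card_subset_Un_le:
  "finite A \<Longrightarrow> finite B \<Longrightarrow> C \<subseteq> A \<union> B \<Longrightarrow> card C \<le> card A + card B"
  by (meson card_Un_le card_mono finite_UnI le_trans)

lemma tight_graphD:
  assumes "tight_graph V E"
  shows "simple_graph V E" "sparse22 V E" "int (card E) = 2 * int (card V) - 2"
  using assms unfolding tight_graph_def by auto

lemma sparse22_insert_vertex:
  assumes G': "simple_graph (insert v V) E'" and v: "v \<notin> V"
    and avoid: "\<And>X. X \<subseteq> V \<Longrightarrow> X \<noteq> {} \<Longrightarrow>
                  int (card (induced_edges E' X)) \<le> 2 * int (card X) - 2"
    and through: "\<And>X. X \<subseteq> V \<Longrightarrow> X \<noteq> {} \<Longrightarrow>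
                  int (card (induced_edges E' (insert v X))) \<le> 2 * int (card X)"
  shows "sparse22 (insert v V) E'"
  unfolding sparse22_def
proof (intro allI impI)
  fix X assume X: "X \<subseteq> insert v V \<and> X \<noteq> {}"
  show "int (card (induced_edges E' X)) \<le> 2 * int (card X) - 2"
  proof (cases "v \<in> X")
    case False
    thus ?thesis using avoid X by blast
  next
    case True
    define X0 where "X0 = X - {v}"
    have X0: "X = insert v X0" "X0 \<subseteq> V" "v \<notin> X0" using X True unfolding X0_def by auto
    have "finite X0" using X0 G' simple_graph_finite by (meson finite_insert finite_subset)
    thus ?thesis
      using through[OF X0(2)] induced_edges_singleton[OF G'] X0 by (cases "X0 = {}") auto
  qed
qed

lemma tight_graph_henneberg1:
  assumes G: "tight_graph V E" and v: "v \<notin> V" and v12: "v1 \<in> V" "v2 \<in> V" "v1 \<noteq> v2"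
  shows "tight_graph (insert v V) (E \<union> {{v, v1}, {v, v2}})"
proof -
  let ?F = "{{v, v1}, {v, v2}}"
  note sg = tight_graphD(1)[OF G] and s = tight_graphD(2)[OF G]
  have fE: "finite E" by (rule simple_graph_finite_edges[OF sg])
  have sg': "simple_graph (insert v V) (E \<union> ?F)"
    using sg v v12 unfolding simple_graph_def by (auto simp: card_insert_if)
  have "E \<inter> ?F = {}" using v simple_graph_edges_subset[OF sg] by auto
  moreover have "card ?F = 2" using v12 by (simp add: doubleton_eq_iff)
  ultimately have "card (E \<union> ?F) = card E + 2" using fE by (subst card_Un_disjoint) auto
  moreover have "card (insert v V) = card V + 1"
    using v simple_graph_finite[OF sg] by simp
  moreover have "sparse22 (insert v V) (E \<union> ?F)"
  proof (rule sparse22_insert_vertex[OF sg' v])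
    fix X assume X: "X \<subseteq> V" "X \<noteq> {}"
    have "induced_edges (E \<union> ?F) X = induced_edges E X"
      using X v unfolding induced_edges_def by auto
    thus "int (card (induced_edges (E \<union> ?F) X)) \<le> 2 * int (card X) - 2"
      using sparse22D[OF s X] by simp
  next
    fix X assume X: "X \<subseteq> V" "X \<noteq> {}"
    have "induced_edges (E \<union> ?F) (insert v X) \<subseteq> induced_edges E X \<union> ?F"
      using v simple_graph_edges_subset[OF sg] unfolding induced_edges_def by auto
    hence "card (induced_edges (E \<union> ?F) (insert v X)) \<le> card (induced_edges E X) + card ?F"
      by (intro card_subset_Un_le finite_induced_edges fE) auto
    hence "card (induced_edges (E \<union> ?F) (insert v X)) \<le> card (induced_edges E X) + 2"
      using card_doubleton_le[of "{v, v1}" "{v, v2}"] by linarith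
    thus "int (card (induced_edges (E \<union> ?F) (insert v X))) \<le> 2 * int (card X)"
      using sparse22D[OF s X] by linarith
  qed
  ultimately show ?thesis using sg' tight_graphD(3)[OF G] unfolding tight_graph_def by simp
qed

lemma card_induced_edges_henneberg2:
  assumes sg: "simple_graph V E" and v: "v \<notin> V" and e12: "{v1, v2} \<in> E" and v3: "v3 \<in> V"
  shows "card (induced_edges ((E - {{v1, v2}}) \<union> {{v, v1}, {v, v2}, {v, v3}}) (insert v X))
           \<le> card (induced_edges E X) + 2"
proof -
  let ?F = "{{v, v1}, {v, v2}, {v, v3}}" and ?E' = "(E - {{v1, v2}}) \<union> {{v, v1}, {v, v2}, {v, v3}}"
  let ?B = "{v1, v2, v3} \<inter> X"
  have fE: "finite E" by (rule simple_graph_finite_edges[OF sg])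
  have v12: "v1 \<in> V" "v2 \<in> V" using simple_graph_adjacent[OF sg e12] by auto
  have "induced_edges ?E' (insert v X) \<subseteq> (induced_edges E X - {{v1, v2}}) \<union> (\<lambda>y. {v, y}) ` ?B"
  proof
    fix e assume e: "e \<in> induced_edges ?E' (insert v X)"
    show "e \<in> (induced_edges E X - {{v1, v2}}) \<union> (\<lambda>y. {v, y}) ` ?B"
    proof (cases "e \<in> E")
      case True
      hence "e \<subseteq> V" using simple_graph_edges_subset[OF sg] by blast
      thus ?thesis using e True v unfolding induced_edges_def by auto
    next
      case False
      hence "e \<in> ?F" "e \<subseteq> insert v X" using e unfolding induced_edges_def by auto
      thus ?thesis using v v12 v3 by auto
    qed
  qed
  hence "card (induced_edges ?E' (insert v X))
      \<le> card (induced_edges E X - {{v1, v2}}) + card ((\<lambda>y. {v, y}) ` ?B)"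
    by (intro card_subset_Un_le) (auto simp: fE finite_induced_edges)
  moreover have "card ((\<lambda>y. {v, y}) ` ?B) \<le> card ?B" by (rule card_image_le) simp
  moreover have "card (induced_edges E X - {{v1, v2}}) + card ?B \<le> card (induced_edges E X) + 2"
  proof (cases "v1 \<in> X \<and> v2 \<in> X")
    case True
    hence "{v1, v2} \<in> induced_edges E X" using e12 unfolding induced_edges_def by auto
    moreover have "card ?B \<le> card {v1, v2, v3}" by (rule card_mono) auto
    ultimately show ?thesis
      using card_triple_le[of v1 v2 v3] card_Suc_Diff1[OF finite_induced_edges[OF fE]] by fastforce
  next
    case False
    hence "?B \<subseteq> {v2, v3} \<or> ?B \<subseteq> {v1, v3}" by auto
    hence "card ?B \<le> 2"
      using card_mono[of "{v2, v3}" ?B] card_mono[of "{v1, v3}" ?B] card_doubleton_le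
      by (metis finite.emptyI finite.insertI order_trans)
    moreover have "card (induced_edges E X - {{v1, v2}}) \<le> card (induced_edges E X)"
      by (rule card_Diff1_le)
    ultimately show ?thesis by linarith
  qed
  ultimately show ?thesis by linarith
qed

lemma tight_graph_henneberg2:
  assumes G: "tight_graph V E" and v: "v \<notin> V" and e12: "{v1, v2} \<in> E" and v3: "v3 \<in> V"
    and d: "v1 \<noteq> v2" "v1 \<noteq> v3" "v2 \<noteq> v3"
  shows "tight_graph (insert v V) ((E - {{v1, v2}}) \<union> {{v, v1}, {v, v2}, {v, v3}})"
proof -
  let ?F = "{{v, v1}, {v, v2}, {v, v3}}" and ?E' = "(E - {{v1, v2}}) \<union> {{v, v1}, {v, v2}, {v, v3}}"
  note sg = tight_graphD(1)[OF G] and s = tight_graphD(2)[OF G]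
  have fE: "finite E" by (rule simple_graph_finite_edges[OF sg])
  have v12: "v1 \<in> V" "v2 \<in> V" using simple_graph_adjacent[OF sg e12] by auto
  have sg': "simple_graph (insert v V) ?E'"
    using sg v v12 v3 unfolding simple_graph_def by (auto simp: card_insert_if)
  have "(E - {{v1, v2}}) \<inter> ?F = {}" using v simple_graph_edges_subset[OF sg] by auto
  moreover have "card ?F = 3" using d by (simp add: doubleton_eq_iff)
  moreover have "card (E - {{v1, v2}}) + 1 = card E" using card_Suc_Diff1[OF fE e12] by simp
  ultimately have "card ?E' + 1 = card E + 3" using fE by (subst card_Un_disjoint) auto
  moreover have "card (insert v V) = card V + 1"
    using v simple_graph_finite[OF sg] by simp
  moreover have "sparse22 (insert v V) ?E'"
  proof (rule sparse22_insert_vertex[OF sg' v])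
    fix X assume X: "X \<subseteq> V" "X \<noteq> {}"
    have "card (induced_edges ?E' X) \<le> card (induced_edges E X)"
      using X v by (intro card_mono finite_induced_edges fE) (auto simp: induced_edges_def)
    thus "int (card (induced_edges ?E' X)) \<le> 2 * int (card X) - 2"
      using sparse22D[OF s X] by linarith
  next
    fix X assume X: "X \<subseteq> V" "X \<noteq> {}"
    show "int (card (induced_edges ?E' (insert v X))) \<le> 2 * int (card X)"
      using card_induced_edges_henneberg2[OF sg v e12 v3, of X] sparse22D[OF s X] by linarith
  qed
  ultimately show ?thesis using sg' tight_graphD(3)[OF G] unfolding tight_graph_def by simp
qed

definition clique_edges :: "'a set \<Rightarrow> 'a set set" where
  "clique_edges W = {e. e \<subseteq> W \<and> card e = 2}"

lemma clique_edges_eq: "{{w, w'} | w w'. w \<in> W \<and> w' \<in> W \<and> w \<noteq> w'} = clique_edges W"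
  unfolding clique_edges_def by (auto simp: card_2_iff)

lemma card_clique_edges: "finite W \<Longrightarrow> card (clique_edges W) = card W choose 2"
  unfolding clique_edges_def by (rule n_subsets)

lemma finite_clique_edges: "finite W \<Longrightarrow> finite (clique_edges W)"
  unfolding clique_edges_def by simp

lemma choose_two_le: "1 \<le> k \<Longrightarrow> k \<le> 4 \<Longrightarrow> int (k choose 2) \<le> 2 * int k - 2"
proof -
  assume "1 \<le> k" "k \<le> 4"
  hence "k = 1 \<or> k = 2 \<or> k = 3 \<or> k = 4" by auto
  thus ?thesis by (auto simp: numeral_eq_Suc)
qed

lemma induced_edges_vertex_to_K4_subset:
  assumes sg: "simple_graph V E" and W: "W \<inter> V = {}" and f: "\<forall>x\<in>nbrs E v. f x \<in> W"
  shows "induced_edges ({e\<in>E. v \<notin> e} \<union> clique_edges W \<union> (\<lambda>x. {x, f x}) ` nbrs E v) X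
           \<subseteq> induced_edges E (X - W) \<union> clique_edges (X \<inter> W)
             \<union> (\<lambda>x. {x, f x}) ` {x \<in> nbrs E v \<inter> (X - W). f x \<in> X \<inter> W}"
proof
  fix e
  assume e: "e \<in> induced_edges ({e\<in>E. v \<notin> e} \<union> clique_edges W \<union> (\<lambda>x. {x, f x}) ` nbrs E v) X"
  hence eX: "e \<subseteq> X" by (simp add: induced_edges_def)
  consider "e \<in> E" | "e \<in> clique_edges W" | x where "x \<in> nbrs E v" "e = {x, f x}"
    using e by (auto simp: induced_edges_def)
  thus "e \<in> induced_edges E (X - W) \<union> clique_edges (X \<inter> W)
             \<union> (\<lambda>x. {x, f x}) ` {x \<in> nbrs E v \<inter> (X - W). f x \<in> X \<inter> W}"
  proof cases
    case 1
    hence "e \<subseteq> V" using simple_graph_edges_subset[OF sg] by blast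
    thus ?thesis using 1 eX W by (auto simp: induced_edges_def)
  next
    case 2
    thus ?thesis using eX by (auto simp: clique_edges_def)
  next
    case (3 x)
    hence "x \<in> X - W" "f x \<in> X \<inter> W" using eX W f nbrs_subset[OF sg, of v] by auto
    thus ?thesis using 3 by auto
  qed
qed

lemma sparse22_vertex_to_K4:
  assumes sg: "simple_graph V E" and s: "sparse22 V E" and v: "v \<in> V"
    and W: "W \<inter> V = {}" "card W = 4" and f: "\<forall>x\<in>nbrs E v. f x \<in> W"
  shows "sparse22 ((V - {v}) \<union> W)
           ({e\<in>E. v \<notin> e} \<union> clique_edges W \<union> (\<lambda>x. {x, f x}) ` nbrs E v)"
    (is "sparse22 ?V' ?E'")
  unfolding sparse22_def
proof (intro allI impI)
  fix X assume X: "X \<subseteq> ?V' \<and> X \<noteq> {}"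
  define X0 XW where "X0 = X - W" and "XW = X \<inter> W"
  define M where "M = {x \<in> nbrs E v \<inter> X0. f x \<in> XW}"
  have fE: "finite E" and fW: "finite W"
    using simple_graph_finite_edges[OF sg] W(2) card.infinite by fastforce+
  have X0: "X0 \<subseteq> V" "v \<notin> X0" using X unfolding X0_def by auto
  have fX0: "finite X0" using X0(1) simple_graph_finite[OF sg] finite_subset by blast
  hence fin: "finite X0" "finite XW" "finite M"
    using fW unfolding XW_def M_def by (auto intro: finite_subset[of _ X0])
  have "card (X0 \<union> XW) = card X0 + card XW"
    by (rule card_Un_disjoint[OF fin(1,2)]) (auto simp: X0_def XW_def)
  moreover have "X0 \<union> XW = X" by (auto simp: X0_def XW_def)
  ultimately have cX: "card X = card X0 + card XW" by simp
  have "card (induced_edges ?E' X)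
      \<le> card (induced_edges E X0 \<union> clique_edges XW) + card ((\<lambda>x. {x, f x}) ` M)"
    using induced_edges_vertex_to_K4_subset[OF sg W(1) f, of X] fin unfolding X0_def XW_def M_def
    by (intro card_subset_Un_le) (auto simp: fE finite_induced_edges finite_clique_edges)
  moreover have "card (induced_edges E X0 \<union> clique_edges XW)
      \<le> card (induced_edges E X0) + card (clique_edges XW)" by (rule card_Un_le)
  moreover have "card ((\<lambda>x. {x, f x}) ` M) \<le> card M" by (rule card_image_le[OF fin(3)])
  ultimately have bound:
    "card (induced_edges ?E' X) \<le> card (induced_edges E X0) + (card XW choose 2) + card M"
    using card_clique_edges[OF fin(2)] by simp
  show "int (card (induced_edges ?E' X)) \<le> 2 * int (card X) - 2"
  proof (cases "XW = {}")
    case True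
    hence "M = {}" "X0 \<noteq> {}" using X unfolding M_def X0_def XW_def by auto
    thus ?thesis using bound cX sparse22D[OF s X0(1)] True by (simp add: binomial_eq_0)
  next
    case False
    have "card (induced_edges E X0) + card M \<le> card (induced_edges E (insert v X0))"
      by (rule card_induced_edges_insert) (use fE X0 fin in \<open>auto simp: M_def in_nbrs_iff\<close>)
    moreover have "int (card (induced_edges E (insert v X0))) \<le> 2 * int (card X0)"
      using sparse22D[OF s, of "insert v X0"] X0 v fin(1) by simp
    moreover have "int (card XW choose 2) \<le> 2 * int (card XW) - 2"
      using False fin(2) card_mono[OF fW, of XW] W(2)
      by (intro choose_two_le) (auto simp: Suc_leI card_gt_0_iff XW_def)
    ultimately show ?thesis using bound cX by linarith
  qed
qed

lemma simple_graph_vertex_to_K4: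
  assumes sg: "simple_graph V E" and W: "W \<inter> V = {}" "finite W" and f: "\<forall>x\<in>nbrs E v. f x \<in> W"
  shows "simple_graph ((V - {v}) \<union> W)
           ({e\<in>E. v \<notin> e} \<union> clique_edges W \<union> (\<lambda>x. {x, f x}) ` nbrs E v)"
  unfolding simple_graph_def
proof (rule conjI[OF _ ballI])
  show "finite ((V - {v}) \<union> W)" using simple_graph_finite[OF sg] W(2) by simp
  fix e assume "e \<in> {e\<in>E. v \<notin> e} \<union> clique_edges W \<union> (\<lambda>x. {x, f x}) ` nbrs E v"
  then consider "e \<in> E" "v \<notin> e" | "e \<in> clique_edges W" | x where "x \<in> nbrs E v" "e = {x, f x}"
    by auto
  thus "e \<subseteq> (V - {v}) \<union> W \<and> card e = 2"
  proof cases
    case 1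
    thus ?thesis using sg unfolding simple_graph_def by auto
  next
    case 2
    thus ?thesis unfolding clique_edges_def by auto
  next
    case (3 x)
    hence "x \<in> V - {v}" "f x \<in> W"
      using f nbrs_subset[OF sg, of v] not_in_nbrs_self[OF sg, of v] by auto
    moreover from this have "x \<noteq> f x" using W(1) by auto
    ultimately show ?thesis using 3 by auto
  qed
qed

lemma card_vertex_to_K4:
  assumes sg: "simple_graph V E" and W: "W \<inter> V = {}" "card W = 4"
    and f: "\<forall>x\<in>nbrs E v. f x \<in> W"
  shows "card ({e\<in>E. v \<notin> e} \<union> clique_edges W \<union> (\<lambda>x. {x, f x}) ` nbrs E v) = card E + 6"
proof -
  let ?E1 = "{e\<in>E. v \<notin> e}" and ?C = "(\<lambda>x. {x, f x}) ` nbrs E v"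
  have fE: "finite E" and fV: "finite V" and fW: "finite W"
    using simple_graph_finite_edges[OF sg] simple_graph_finite[OF sg] W(2) card.infinite
    by fastforce+
  have fN: "x \<notin> W \<and> f x \<in> W \<and> f x \<notin> V" if "x \<in> nbrs E v" for x
    using that nbrs_subset[OF sg, of v] W(1) f by blast
  have edge: "e \<subseteq> V" "card e = 2" if "e \<in> E" for e using that sg unfolding simple_graph_def by auto
  have disj1: "?E1 \<inter> clique_edges W = {}"
  proof (rule equals0I)
    fix e assume "e \<in> ?E1 \<inter> clique_edges W"
    hence "e \<subseteq> V \<inter> W" "card e = 2" using edge unfolding clique_edges_def by auto
    thus False using W(1) by (metis Int_commute card.empty subset_empty zero_neq_numeral)
  qed
  have disj2: "(?E1 \<union> clique_edges W) \<inter> ?C = {}"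
  proof (rule equals0I)
    fix e assume "e \<in> (?E1 \<union> clique_edges W) \<inter> ?C"
    then obtain x where x: "x \<in> nbrs E v" "e = {x, f x}" "e \<in> E \<or> e \<subseteq> W"
      unfolding clique_edges_def by auto
    thus False using fN[OF x(1)] edge by auto
  qed
  have "inj_on (\<lambda>x. {x, f x}) (nbrs E v)"
    by (rule inj_onI) (metis doubleton_eq_iff fN)
  hence "card ?C = card (nbrs E v)" by (rule card_image)
  moreover have "card (clique_edges W) = 6"
    using card_clique_edges[OF fW] W(2) by (simp add: numeral_eq_Suc)
  moreover have "finite ?E1" "finite ?C"
    using fE nbrs_subset[OF sg, of v] fV by (auto intro: finite_subset)
  ultimately have "card (?E1 \<union> clique_edges W \<union> ?C) = card ?E1 + 6 + card (nbrs E v)"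
    using card_Un_disjoint[OF _ _ disj1] card_Un_disjoint[OF _ _ disj2] finite_clique_edges[OF fW]
    by simp
  thus ?thesis using card_edges_split_vertex[OF sg, of v] by simp
qed

lemma tight_graph_vertex_to_K4:
  assumes G: "tight_graph V E" and v: "v \<in> V"
    and W: "W \<inter> V = {}" "card W = 4" and f: "\<forall>x\<in>nbrs E v. f x \<in> W"
  shows "tight_graph ((V - {v}) \<union> W)
           ({e\<in>E. v \<notin> e} \<union> clique_edges W \<union> (\<lambda>x. {x, f x}) ` nbrs E v)"
proof -
  note sg = tight_graphD(1)[OF G]
  have fV: "finite V" and fW: "finite W"
    using simple_graph_finite[OF sg] W(2) card.infinite by fastforce+
  have "card ((V - {v}) \<union> W) = card (V - {v}) + card W"
    using W(1) fV fW by (intro card_Un_disjoint) auto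
  moreover have "card (V - {v}) + 1 = card V" using v fV card_Suc_Diff1 by fastforce
  ultimately show ?thesis
    using simple_graph_vertex_to_K4[OF sg W(1) fW f] sparse22_vertex_to_K4[OF sg _ v W f]
      card_vertex_to_K4[OF sg W f] tight_graphD[OF G] W(2)
    unfolding tight_graph_def by simp
qed

lemma card_induced_edges_vertex_to_4cycle:
  assumes sg: "simple_graph V E" and v23: "v2 \<in> nbrs E v1" "v3 \<in> nbrs E v1"
    and v0: "v0 \<notin> V" and S: "S \<subseteq> nbrs E v1 - {v2, v3}" and X: "X \<subseteq> V"
  shows "card (induced_edges ((E - (\<lambda>x. {x, v1}) ` S) \<union> (\<lambda>x. {x, v0}) ` S \<union> {{v0, v2}, {v0, v3}})
                (insert v0 X))
           \<le> card (induced_edges E X - (\<lambda>x. {x, v1}) ` (S \<inter> X)) + card ((S \<union> {v2, v3}) \<inter> X)"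
    (is "card (induced_edges ?E' _) \<le> card (_ - ?R) + card ?T")
proof -
  have fE: "finite E" by (rule simple_graph_finite_edges[OF sg])
  have fX: "finite X" using X simple_graph_finite[OF sg] finite_subset by auto
  have "induced_edges ?E' (insert v0 X) \<subseteq> (induced_edges E X - ?R) \<union> (\<lambda>y. {y, v0}) ` ?T"
  proof
    fix e assume e: "e \<in> induced_edges ?E' (insert v0 X)"
    hence eX: "e \<subseteq> insert v0 X" by (simp add: induced_edges_def)
    consider "e \<in> E - (\<lambda>x. {x, v1}) ` S" | y where "y \<in> S \<union> {v2, v3}" "e = {y, v0}"
      using e unfolding induced_edges_def by (auto simp: insert_commute)
    thus "e \<in> (induced_edges E X - ?R) \<union> (\<lambda>y. {y, v0}) ` ?T"
    proof cases
      case 1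
      hence "e \<subseteq> V" using simple_graph_edges_subset[OF sg] by blast
      thus ?thesis using 1 eX v0 unfolding induced_edges_def by auto
    next
      case (2 y)
      hence "y \<noteq> v0" using v0 v23 S nbrs_subset[OF sg] by auto
      thus ?thesis using 2 eX by auto
    qed
  qed
  hence "card (induced_edges ?E' (insert v0 X))
      \<le> card (induced_edges E X - ?R) + card ((\<lambda>y. {y, v0}) ` ?T)"
    using fX by (intro card_subset_Un_le) (auto simp: fE finite_induced_edges)
  moreover have "card ((\<lambda>y. {y, v0}) ` ?T) \<le> card ?T" by (rule card_image_le) (use fX in auto)
  ultimately show ?thesis by linarith
qed

lemma sparse22_vertex_to_4cycle:
  assumes sg: "simple_graph V E" and s: "sparse22 V E"
    and v23: "v2 \<in> nbrs E v1" "v3 \<in> nbrs E v1" and v0: "v0 \<notin> V"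
    and S: "S \<subseteq> nbrs E v1 - {v2, v3}"
    and sg': "simple_graph (insert v0 V)
               ((E - (\<lambda>x. {x, v1}) ` S) \<union> (\<lambda>x. {x, v0}) ` S \<union> {{v0, v2}, {v0, v3}})"
  shows "sparse22 (insert v0 V)
           ((E - (\<lambda>x. {x, v1}) ` S) \<union> (\<lambda>x. {x, v0}) ` S \<union> {{v0, v2}, {v0, v3}})"
    (is "sparse22 _ ?E'")
proof (rule sparse22_insert_vertex[OF sg' v0])
  have fE: "finite E" by (rule simple_graph_finite_edges[OF sg])
  fix X assume X: "X \<subseteq> V" "X \<noteq> {}"
  have "card (induced_edges ?E' X) \<le> card (induced_edges E X)"
    using X v0 by (intro card_mono finite_induced_edges fE) (auto simp: induced_edges_def)
  thus "int (card (induced_edges ?E' X)) \<le> 2 * int (card X) - 2"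
    using sparse22D[OF s X] by linarith
next
  have fE: "finite E" by (rule simple_graph_finite_edges[OF sg])
  fix X assume X: "X \<subseteq> V" "X \<noteq> {}"
  have fX: "finite X" using X simple_graph_finite[OF sg] finite_subset by auto
  let ?R = "(\<lambda>x. {x, v1}) ` (S \<inter> X)" and ?T = "(S \<union> {v2, v3}) \<inter> X"
  note bound = card_induced_edges_vertex_to_4cycle[OF sg v23 v0 S X(1)]
  show "int (card (induced_edges ?E' (insert v0 X))) \<le> 2 * int (card X)"
  proof (cases "v1 \<in> X")
    case True
    have v1S: "v1 \<notin> S" using S not_in_nbrs_self[OF sg] by auto
    have "?R \<subseteq> induced_edges E X"
      using True S unfolding induced_edges_def by (auto simp: in_nbrs_iff insert_commute)
    moreover have "card ?R = card (S \<inter> X)"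
      by (rule card_image[OF inj_on_doubleton]) (use v1S in auto)
    ultimately have "card (induced_edges E X - ?R) + card (S \<inter> X) = card (induced_edges E X)"
      by (metis card_Diff_subset card_mono fE finite_induced_edges finite_subset le_add_diff_inverse2)
    moreover have "card ?T \<le> card (S \<inter> X) + card {v2, v3}"
      using fX by (intro card_subset_Un_le) auto
    hence "card ?T \<le> card (S \<inter> X) + 2" using card_doubleton_le[of v2 v3] by linarith
    ultimately show ?thesis using bound sparse22D[OF s X] by linarith
  next
    case False
    have "?T \<subseteq> nbrs E v1 \<inter> X" using S v23 by auto
    hence "card (induced_edges E X) + card ?T \<le> card (induced_edges E (insert v1 X))"
      using False fE fX by (intro card_induced_edges_insert) (auto simp: in_nbrs_iff)
    moreover have "int (card (induced_edges E (insert v1 X))) \<le> 2 * int (card X)"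
      using sparse22D[OF s, of "insert v1 X"] X False fX
        simple_graph_adjacent[OF sg, of v1 v2] v23(1) by (simp add: in_nbrs_iff)
    moreover have "card (induced_edges E X - ?R) \<le> card (induced_edges E X)"
      by (rule card_mono) (auto simp: fE finite_induced_edges)
    ultimately show ?thesis using bound by linarith
  qed
qed

lemma tight_graph_vertex_to_4cycle:
  assumes G: "tight_graph V E"
    and v23: "v2 \<in> nbrs E v1" "v3 \<in> nbrs E v1" "v2 \<noteq> v3" and v0: "v0 \<notin> V"
    and S: "S \<subseteq> nbrs E v1 - {v2, v3}"
  shows "tight_graph (insert v0 V)
           ((E - (\<lambda>x. {x, v1}) ` S) \<union> (\<lambda>x. {x, v0}) ` S \<union> {{v0, v2}, {v0, v3}})"
proof -
  let ?R = "(\<lambda>x. {x, v1}) ` S" and ?A = "(\<lambda>x. {x, v0}) ` S" and ?D = "{{v0, v2}, {v0, v3}}"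
  note sg = tight_graphD(1)[OF G]
  have fE: "finite E" and fV: "finite V"
    using simple_graph_finite_edges[OF sg] simple_graph_finite[OF sg] by auto
  have N: "nbrs E v1 \<subseteq> V" "v1 \<notin> nbrs E v1"
    using nbrs_subset[OF sg] not_in_nbrs_self[OF sg] by auto
  have SV: "S \<subseteq> V" using S N by auto
  hence fS: "finite S" using fV finite_subset by blast
  have v0': "v0 \<notin> S" "v0 \<noteq> v2" "v0 \<noteq> v3" using v0 v23 SV N by auto
  have sg': "simple_graph (insert v0 V) ((E - ?R) \<union> ?A \<union> ?D)"
    using sg SV v0 v0' v23 N unfolding simple_graph_def by (auto simp: card_insert_if)
  have RE: "?R \<subseteq> E" using S by (auto simp: in_nbrs_iff insert_commute)
  have cRA: "card ?R = card S" "card ?A = card S"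
    using S N v0' by (auto intro!: card_image inj_on_doubleton)
  have d1: "(E - ?R) \<inter> ?A = {}" and d2: "((E - ?R) \<union> ?A) \<inter> ?D = {}"
    using v0 S simple_graph_edges_subset[OF sg] by (auto simp: doubleton_eq_iff)
  have "card (E - ?R) + card S = card E"
    using card_Diff_subset[OF finite_subset[OF RE fE] RE] card_mono[OF fE RE] cRA by simp
  moreover have "card ((E - ?R) \<union> ?A) = card (E - ?R) + card ?A"
    by (rule card_Un_disjoint[OF _ _ d1]) (use fE fS in auto)
  moreover have "card ((E - ?R) \<union> ?A \<union> ?D) = card ((E - ?R) \<union> ?A) + card ?D"
    by (rule card_Un_disjoint[OF _ _ d2]) (use fE fS in auto)
  moreover have "card ?D = 2" using v23(3) by (simp add: doubleton_eq_iff)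
  moreover have "card (insert v0 V) = card V + 1" using v0 fV by simp
  ultimately have "int (card ((E - ?R) \<union> ?A \<union> ?D)) = 2 * int (card (insert v0 V)) - 2"
    using tight_graphD(3)[OF G] cRA by linarith
  thus ?thesis
    using sg' sparse22_vertex_to_4cycle[OF sg tight_graphD(2)[OF G] v23(1,2) v0 S sg']
    unfolding tight_graph_def by simp
qed

lemma tight_graph_K1: "tight_graph {v} {}"
proof -
  have "sparse22 {v} {}"
    unfolding sparse22_def
  proof (intro allI impI)
    fix X :: "'a set" assume "X \<subseteq> {v} \<and> X \<noteq> {}"
    hence "X = {v}" using subset_singletonD by blast
    thus "int (card (induced_edges {} X)) \<le> 2 * int (card X) - 2"
      by (simp add: induced_edges_def)
  qed
  thus ?thesis by (simp add: tight_graph_def simple_graph_def)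
qed

lemma tight_graph_if_constructible: "constructible V E \<Longrightarrow> tight_graph V E"
proof (induction rule: constructible.induct)
  case (K1 v)
  show ?case by (rule tight_graph_K1)
next
  case (henneberg1 V E v v1 v2)
  show ?case by (rule tight_graph_henneberg1[OF henneberg1.IH henneberg1.hyps(2-5)])
next
  case (henneberg2 V E v v1 v2 v3)
  show ?case by (rule tight_graph_henneberg2[OF henneberg2.IH henneberg2.hyps(2-7)])
next
  case (vertex_to_K4 V E v W f)
  have "{{x, f x} | x. x \<in> nbrs E v} = (\<lambda>x. {x, f x}) ` nbrs E v" by auto
  thus ?case using tight_graph_vertex_to_K4[OF vertex_to_K4.IH vertex_to_K4.hyps(2-5)]
    by (simp add: clique_edges_eq)
next
  case (vertex_to_4cycle V E v1 v2 v3 v0 S)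
  have "{{x, y} | x. x \<in> S} = (\<lambda>x. {x, y}) ` S" for y by auto
  thus ?case using tight_graph_vertex_to_4cycle[OF vertex_to_4cycle.IH vertex_to_4cycle.hyps(3-7)]
    by simp
qed


section \<open>Inverse moves\<close>

definition reducible :: "'a set \<Rightarrow> 'a set set \<Rightarrow> bool" where
  "reducible V E \<longleftrightarrow>
     (\<exists>(V' :: 'a set) E'. card V' < card V \<and> tight_graph V' E' \<and>
        (constructible V' E' \<longrightarrow> constructible V E))"

lemma simple_graph_delete_vertex:
  "simple_graph V E \<Longrightarrow> simple_graph (V - {u}) {e\<in>E. u \<notin> e}"
  unfolding simple_graph_def by auto

lemma edges_split_vertex:
  assumes "simple_graph V E"
  shows "E = {e\<in>E. u \<notin> e} \<union> (\<lambda>x. {u, x}) ` nbrs E u"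
proof -
  have "E = {e\<in>E. u \<notin> e} \<union> {e\<in>E. u \<in> e}" by auto
  thus ?thesis unfolding edges_at_vertex[OF assms] .
qed

lemma tight_set_delete_vertex:
  "tight_set (V - {u}) {e\<in>E. u \<notin> e} X \<longleftrightarrow> tight_set V E X \<and> u \<notin> X"
proof (cases "u \<in> X")
  case False
  hence "induced_edges {e\<in>E. u \<notin> e} X = induced_edges E X"
    unfolding induced_edges_def by auto
  thus ?thesis using False unfolding tight_set_def by auto
qed (auto simp: tight_set_def)

lemma sparse22_insert_edge:
  assumes fE: "finite E" and s: "sparse22 V E" and pq: "{p, q} \<notin> E"
    and loose: "\<And>X. tight_set V E X \<Longrightarrow> p \<in> X \<Longrightarrow> q \<in> X \<Longrightarrow> False"
  shows "sparse22 V (insert {p, q} E)"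
  unfolding sparse22_def
proof (intro allI impI)
  fix X assume X: "X \<subseteq> V \<and> X \<noteq> {}"
  show "int (card (induced_edges (insert {p, q} E) X)) \<le> 2 * int (card X) - 2"
  proof (cases "p \<in> X \<and> q \<in> X")
    case True
    hence "induced_edges (insert {p, q} E) X = insert {p, q} (induced_edges E X)"
      unfolding induced_edges_def by auto
    moreover have "{p, q} \<notin> induced_edges E X" using pq unfolding induced_edges_def by auto
    moreover have "\<not> tight_set V E X" using loose True by blast
    hence "int (card (induced_edges E X)) < 2 * int (card X) - 2"
      using sparse22D[OF s, of X] X unfolding tight_set_def by auto
    ultimately show ?thesis using fE by (simp add: finite_induced_edges)
  next
    case False
    hence "induced_edges (insert {p, q} E) X = induced_edges E X"
      unfolding induced_edges_def by auto
    thus ?thesis using sparse22D[OF s, of X] X by simp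
  qed
qed

lemma tight_set_insert_bound:
  assumes sg: "simple_graph V E" and s: "sparse22 V E" and X: "tight_set V E X"
    and u: "u \<in> V" "u \<notin> X"
  shows "card (nbrs E u \<inter> X) \<le> 2"
    and "card (nbrs E u \<inter> X) = 2 \<Longrightarrow> tight_set V E (insert u X)"
proof -
  have fX: "finite X" using X simple_graph_finite[OF sg] finite_subset unfolding tight_set_def by blast
  have "card (induced_edges E X) + card (nbrs E u \<inter> X) \<le> card (induced_edges E (insert u X))"
    using u fX simple_graph_finite_edges[OF sg]
    by (intro card_induced_edges_insert) (auto simp: in_nbrs_iff)
  moreover have "int (card (induced_edges E (insert u X))) \<le> 2 * int (card (insert u X)) - 2"
    by (rule sparse22D[OF s]) (use X u in \<open>auto simp: tight_set_def\<close>)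
  ultimately show "card (nbrs E u \<inter> X) \<le> 2"
    and "card (nbrs E u \<inter> X) = 2 \<Longrightarrow> tight_set V E (insert u X)"
    using X u fX unfolding tight_set_def by auto
qed

locale tight22 =
  fixes V :: "'a set" and E :: "'a set set"
  assumes tight: "tight_graph V E"
begin

lemma simple: "simple_graph V E" and sparse: "sparse22 V E"
  and edge_count: "int (card E) = 2 * int (card V) - 2"
  using tight_graphD[OF tight] by auto

lemma finite_V: "finite V" and finite_E: "finite E"
  using simple simple_graph_finite simple_graph_finite_edges by auto

lemma adjacent: "{x, y} \<in> E \<Longrightarrow> x \<noteq> y \<and> x \<in> V \<and> y \<in> V"
  by (rule simple_graph_adjacent[OF simple])

lemma nbrs_subset_delete: "nbrs E u \<subseteq> V - {u}"
  using nbrs_subset[OF simple, of u] not_in_nbrs_self[OF simple, of u] by auto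

lemma card_delete_vertex:
  assumes "u \<in> V"
  shows "int (card {e\<in>E. u \<notin> e}) = 2 * int (card (V - {u})) - int (card (nbrs E u))"
proof -
  have "card (V - {u}) + 1 = card V" using assms finite_V card_Suc_Diff1 by fastforce
  thus ?thesis using card_edges_split_vertex[OF simple, of u] edge_count by linarith
qed

lemma degree_ge_two:
  assumes "2 \<le> card V" "u \<in> V"
  shows "2 \<le> card (nbrs E u)"
proof -
  have "card (V - {u}) = card V - 1" using assms(2) finite_V by simp
  hence "card (V - {u}) \<noteq> 0" using assms(1) by linarith
  hence "V - {u} \<noteq> {}" by (metis card.empty)
  moreover have "induced_edges E (V - {u}) = {e\<in>E. u \<notin> e}"
    using simple_graph_edges_subset[OF simple] unfolding induced_edges_def by auto
  ultimately show ?thesis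
    using sparse22D[OF sparse, of "V - {u}"] card_delete_vertex[OF assms(2)] by auto
qed

lemma exists_degree_le_three:
  assumes "2 \<le> card V"
  shows "\<exists>u\<in>V. card (nbrs E u) \<le> 3"
proof (rule ccontr)
  assume "\<not> (\<exists>u\<in>V. card (nbrs E u) \<le> 3)"
  hence "(\<Sum>u\<in>V. 4) \<le> (\<Sum>u\<in>V. card (nbrs E u))" by (intro sum_mono) auto
  hence "4 * card V \<le> 2 * card E" using sum_degrees[OF simple] by simp
  thus False using edge_count assms by linarith
qed

lemma tight_delete_vertex:
  assumes u: "u \<in> V"
  shows "simple_graph (V - {u}) {e\<in>E. u \<notin> e}" and "sparse22 (V - {u}) {e\<in>E. u \<notin> e}"
  using simple_graph_delete_vertex[OF simple] sparse22_subgraph[OF finite_E sparse] by auto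

lemma tight_set_no_three_nbrs:
  assumes X: "tight_set V E X" and y: "y \<in> V" "y \<notin> X" and abc: "a \<in> X" "b \<in> X" "c \<in> X"
    and e: "{y, a} \<in> E" "{y, b} \<in> E" "{y, c} \<in> E" and d: "a \<noteq> b" "a \<noteq> c" "b \<noteq> c"
  shows False
proof -
  have "{a, b, c} \<subseteq> nbrs E y \<inter> X" using abc e by (auto simp: in_nbrs_iff)
  hence "card {a, b, c} \<le> card (nbrs E y \<inter> X)"
    using finite_V nbrs_subset[OF simple] by (intro card_mono) (auto intro: finite_subset)
  thus False using tight_set_insert_bound(1)[OF simple sparse X y] d by simp
qed

lemma tight_set_insert_two_nbrs:
  assumes X: "tight_set V E X" and y: "y \<in> V" "y \<notin> X" and ab: "a \<in> X" "b \<in> X"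
    and e: "{y, a} \<in> E" "{y, b} \<in> E" and d: "a \<noteq> b"
  shows "tight_set V E (insert y X)"
proof -
  have "{a, b} \<subseteq> nbrs E y \<inter> X" using ab e by (auto simp: in_nbrs_iff)
  hence "card {a, b} \<le> card (nbrs E y \<inter> X)"
    using finite_V nbrs_subset[OF simple] by (intro card_mono) (auto intro: finite_subset)
  hence "card (nbrs E y \<inter> X) = 2" using tight_set_insert_bound(1)[OF simple sparse X y] d by simp
  thus ?thesis by (rule tight_set_insert_bound(2)[OF simple sparse X y])
qed

lemma nbrs_triple_edges:
  assumes "nbrs E u = {p, q, r}"
  shows "{u, p} \<in> E" "{u, q} \<in> E" "{u, r} \<in> E"
  using in_nbrs_iff[of p E u] in_nbrs_iff[of q E u] in_nbrs_iff[of r E u] assms by auto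

text \<open>The obstruction to adding the edge \<open>pq\<close> to \<open>G - u\<close> (see \<open>sparse22_insert_edge\<close>).\<close>

definition blocked :: "'a \<Rightarrow> 'a \<Rightarrow> 'a \<Rightarrow> bool" where
  "blocked u p q \<longleftrightarrow> (\<exists>X. tight_set V E X \<and> u \<notin> X \<and> p \<in> X \<and> q \<in> X)"

lemma reducible_degree_two:
  assumes u: "u \<in> V" and N: "nbrs E u = {a, b}" "a \<noteq> b"
  shows "reducible V E"
  unfolding reducible_def
proof (intro exI[of _ "V - {u}"] exI[of _ "{e\<in>E. u \<notin> e}"] conjI impI)
  show "card (V - {u}) < card V" by (rule card_Diff1_less[OF finite_V u])
  show "tight_graph (V - {u}) {e\<in>E. u \<notin> e}"
    using tight_delete_vertex[OF u] card_delete_vertex[OF u] N unfolding tight_graph_def by simp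
  assume "constructible (V - {u}) {e\<in>E. u \<notin> e}"
  moreover have "a \<in> V - {u}" "b \<in> V - {u}"
    using N nbrs_subset_delete[of u] by auto
  ultimately have "constructible (insert u (V - {u})) ({e\<in>E. u \<notin> e} \<union> {{u, a}, {u, b}})"
    using N by (intro constructible.henneberg1) auto
  moreover have "{e\<in>E. u \<notin> e} \<union> {{u, a}, {u, b}} = E"
    using edges_split_vertex[OF simple, of u] N by auto
  ultimately show "constructible V E" using u by (simp add: insert_absorb)
qed

lemma reducible_henneberg2:
  assumes u: "u \<in> V" and N: "nbrs E u = {p, q, r}" and d: "p \<noteq> q" "p \<noteq> r" "q \<noteq> r"
    and pq: "{p, q} \<notin> E" and unblocked: "\<not> blocked u p q"
  shows "reducible V E"
  unfolding reducible_def
proof (intro exI[of _ "V - {u}"] exI[of _ "insert {p, q} {e\<in>E. u \<notin> e}"] conjI impI)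
  let ?E' = "insert {p, q} {e\<in>E. u \<notin> e}"
  have pqr: "p \<in> V - {u}" "q \<in> V - {u}" "r \<in> V - {u}"
    using N nbrs_subset_delete[of u] by auto
  show "card (V - {u}) < card V" by (rule card_Diff1_less[OF finite_V u])
  have "simple_graph (V - {u}) ?E'"
    using tight_delete_vertex(1)[OF u] pqr d unfolding simple_graph_def by auto
  moreover have "sparse22 (V - {u}) ?E'"
    using tight_delete_vertex(2)[OF u] finite_E pq unblocked
    by (intro sparse22_insert_edge) (auto simp: tight_set_delete_vertex blocked_def)
  moreover have "card ?E' = card {e\<in>E. u \<notin> e} + 1" using pq finite_E by simp
  ultimately show "tight_graph (V - {u}) ?E'"
    using card_delete_vertex[OF u] N d unfolding tight_graph_def by simp
  assume "constructible (V - {u}) ?E'"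
  hence "constructible (insert u (V - {u})) ((?E' - {{p, q}}) \<union> {{u, p}, {u, q}, {u, r}})"
    using pqr d by (intro constructible.henneberg2) auto
  moreover have "(?E' - {{p, q}}) \<union> {{u, p}, {u, q}, {u, r}} = E"
    using edges_split_vertex[OF simple, of u] N pq by auto
  ultimately show "constructible V E" using u by (simp add: insert_absorb)
qed

lemma not_blocked_if_linked:
  assumes u: "u \<in> V" and N: "nbrs E u = {p, q, r}" and d: "p \<noteq> q" "p \<noteq> r" "q \<noteq> r"
    and pr: "{p, r} \<in> E \<or> blocked u p r" and qr: "{q, r} \<in> E \<or> blocked u q r"
  shows "\<not> blocked u p q"
proof
  have three: False if "tight_set V E Y" "u \<notin> Y" "p \<in> Y" "q \<in> Y" "r \<in> Y" for Y
    using tight_set_no_three_nbrs[OF that(1) u that(2-5) nbrs_triple_edges[OF N] d] .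
  assume "blocked u p q"
  then obtain X where X: "tight_set V E X" "u \<notin> X" "p \<in> X" "q \<in> X"
    unfolding blocked_def by blast
  consider "blocked u p r" | "blocked u q r" | "{p, r} \<in> E" "{q, r} \<in> E" using pr qr by blast
  thus False
  proof cases
    case 1
    then obtain Y where "tight_set V E Y" "u \<notin> Y" "p \<in> Y" "r \<in> Y" unfolding blocked_def by blast
    thus False using three[of "X \<union> Y"] tight_set_Un[OF simple sparse X(1)] X by blast
  next
    case 2
    then obtain Y where "tight_set V E Y" "u \<notin> Y" "q \<in> Y" "r \<in> Y" unfolding blocked_def by blast
    thus False using three[of "X \<union> Y"] tight_set_Un[OF simple sparse X(1)] X by blast
  next
    case 3
    have r: "r \<in> V" "r \<noteq> u" using N nbrs_subset_delete[of u] by auto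
    have "r \<notin> X" using three[OF X] by blast
    hence "tight_set V E (insert r X)"
      using tight_set_insert_two_nbrs[OF X(1) r(1) _ X(3,4)] 3 d by (simp add: insert_commute)
    thus False using three[of "insert r X"] X r by blast
  qed
qed

lemma not_blocked_4cycle:
  assumes u: "u \<in> V" and N: "nbrs E u = {p, q, r}" and d: "p \<noteq> q" "p \<noteq> r" "q \<noteq> r"
    and e: "{p, q} \<in> E" "{p, r} \<in> E" "{q, r} \<in> E" "{x, p} \<in> E" "{x, q} \<in> E"
    and x: "x \<notin> {u, p, q, r}"
  shows "\<not> blocked u r x"
proof
  assume "blocked u r x"
  then obtain X where X: "tight_set V E X" "u \<notin> X" "r \<in> X" "x \<in> X"
    unfolding blocked_def by blast
  have V: "p \<in> V" "q \<in> V" using adjacent e by auto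
  have e': "{q, p} \<in> E" "{r, p} \<in> E" "{r, q} \<in> E" "{p, x} \<in> E" "{q, x} \<in> E"
    using e by (simp_all add: insert_commute)
  consider "p \<in> X" "q \<in> X" | "p \<in> X" "q \<notin> X" | "p \<notin> X" "q \<in> X" | "p \<notin> X" "q \<notin> X"
    by blast
  thus False
  proof cases
    case 1
    show False using tight_set_no_three_nbrs[OF X(1) u X(2) 1(1) 1(2) X(3) nbrs_triple_edges[OF N] d] .
  next
    case 2
    thus False using tight_set_no_three_nbrs[OF X(1) V(2) 2(2) X(3,4) 2(1)] e e' x d
      by (auto simp: insert_commute)
  next
    case 3
    thus False using tight_set_no_three_nbrs[OF X(1) V(1) 3(1) X(3,4) 3(2)] e e' x d
      by (auto simp: insert_commute)
  next
    case 4
    have "tight_set V E (insert p X)"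
      using tight_set_insert_two_nbrs[OF X(1) V(1) 4(1) X(3,4) e(2) e'(4)] x by auto
    thus False using tight_set_no_three_nbrs[of "insert p X" q r x p] V 4 X e e' x d
      by (auto simp: insert_commute)
  qed
qed

lemma reducible_4cycle:
  assumes u: "u \<in> V" and N: "nbrs E u = {p, q, r}" and d: "p \<noteq> q" "p \<noteq> r" "q \<noteq> r"
    and e: "{p, q} \<in> E" "{p, r} \<in> E" "{q, r} \<in> E" "{x, p} \<in> E" "{x, q} \<in> E"
    and xr: "{x, r} \<notin> E" and x: "x \<notin> {u, p, q, r}"
  shows "reducible V E"
  unfolding reducible_def
proof (intro exI[of _ "V - {u}"] exI[of _ "insert {r, x} {e\<in>E. u \<notin> e}"] conjI impI)
  let ?E' = "insert {r, x} {e\<in>E. u \<notin> e}"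
  have pqr: "p \<in> V - {u}" "q \<in> V - {u}" "r \<in> V - {u}"
    using N nbrs_subset_delete[of u] by auto
  have xV: "x \<in> V - {u}" using adjacent e x by auto
  have rx: "{r, x} \<notin> E" using xr by (simp add: insert_commute)
  show "card (V - {u}) < card V" by (rule card_Diff1_less[OF finite_V u])
  have "simple_graph (V - {u}) ?E'"
    using tight_delete_vertex(1)[OF u] pqr xV x unfolding simple_graph_def by auto
  moreover have "sparse22 (V - {u}) ?E'"
    using tight_delete_vertex(2)[OF u] finite_E rx not_blocked_4cycle[OF assms(1-10) x]
    by (intro sparse22_insert_edge) (auto simp: tight_set_delete_vertex blocked_def)
  moreover have "card ?E' = card {e\<in>E. u \<notin> e} + 1" using rx finite_E by simp
  ultimately show "tight_graph (V - {u}) ?E'"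
    using card_delete_vertex[OF u] N d unfolding tight_graph_def by simp
  assume "constructible (V - {u}) ?E'"
  moreover have "p \<in> nbrs ?E' x" "q \<in> nbrs ?E' x" "{r} \<subseteq> nbrs ?E' x - {p, q}"
    using e x d pqr by (auto simp: in_nbrs_iff insert_commute)
  ultimately have "constructible (insert u (V - {u}))
      ((?E' - {{y, x} | y. y \<in> {r}}) \<union> {{y, u} | y. y \<in> {r}} \<union> {{u, p}, {u, q}})"
    using xV d by (intro constructible.vertex_to_4cycle) auto
  moreover have "(?E' - {{y, x} | y. y \<in> {r}}) \<union> {{y, u} | y. y \<in> {r}} \<union> {{u, p}, {u, q}} = E"
    using edges_split_vertex[OF simple, of u] N rx by (auto simp: insert_commute)
  ultimately show "constructible V E" using u by (simp add: insert_absorb)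
qed

end

lemma (in tight22) induced_edges_clique:
  assumes "K \<subseteq> V" "clique_edges K \<subseteq> E"
  shows "induced_edges E K = clique_edges K"
  using assms simple unfolding induced_edges_def clique_edges_def simple_graph_def by auto

subsection \<open>Contracting a \<open>K\<^sub>4\<close>\<close>

text \<open>If every vertex outside the 4-clique \<open>K\<close> has at most one neighbour (its \<open>anchor\<close>) in \<open>K\<close>,
  replacing \<open>K\<close> by a fresh vertex \<open>w\<close> reverses a vertex-to-\<open>K\<^sub>4\<close> move.\<close>

locale K4_contraction = tight22 +
  fixes K :: "'a set" and w :: 'a
  assumes K_subset: "K \<subseteq> V" and card_K: "card K = 4" and K_clique: "clique_edges K \<subseteq> E"
    and one_nbr: "\<And>x k k'. x \<in> V - K \<Longrightarrow> k \<in> K \<Longrightarrow> k' \<in> K \<Longrightarrow>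
                   {x, k} \<in> E \<Longrightarrow> {x, k'} \<in> E \<Longrightarrow> k = k'"
    and fresh: "w \<notin> V"
begin

definition attached :: "'a set" where
  "attached = {x \<in> V - K. \<exists>k\<in>K. {x, k} \<in> E}"

definition anchor :: "'a \<Rightarrow> 'a" where
  "anchor x = (THE k. k \<in> K \<and> {x, k} \<in> E)"

definition contracted_edges :: "'a set set" where
  "contracted_edges = induced_edges E (V - K) \<union> (\<lambda>x. {x, w}) ` attached"

lemma anchor_eq:
  assumes "x \<in> V - K" "k \<in> K" "{x, k} \<in> E"
  shows "x \<in> attached" "anchor x = k"
proof -
  show "x \<in> attached" using assms unfolding attached_def by blast
  show "anchor x = k" unfolding anchor_def
    by (rule the_equality) (use assms one_nbr in blast)+
qed

lemma anchor:
  assumes "x \<in> attached"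
  shows "anchor x \<in> K" "{x, anchor x} \<in> E"
proof -
  obtain k where "x \<in> V - K" "k \<in> K" "{x, k} \<in> E" using assms unfolding attached_def by blast
  thus "anchor x \<in> K" "{x, anchor x} \<in> E" using anchor_eq(2) by auto
qed

lemma attached_subset: "attached \<subseteq> V - K"
  unfolding attached_def by blast

lemma finite_K: "finite K"
  using K_subset finite_V finite_subset by blast

lemma card_clique_K: "card (clique_edges K) = 6"
  using card_clique_edges[OF finite_K] card_K by (simp add: numeral_eq_Suc)

lemma induced_edges_Un_K:
  assumes A: "A \<subseteq> V - K"
  shows "induced_edges E (A \<union> K)
           = induced_edges E A \<union> clique_edges K \<union> (\<lambda>x. {x, anchor x}) ` (attached \<inter> A)"
proof
  show "induced_edges E (A \<union> K)
      \<subseteq> induced_edges E A \<union> clique_edges K \<union> (\<lambda>x. {x, anchor x}) ` (attached \<inter> A)"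
  proof
    fix e assume e: "e \<in> induced_edges E (A \<union> K)"
    hence eE: "e \<in> E" and eAK: "e \<subseteq> A \<union> K" unfolding induced_edges_def by auto
    then obtain x y where xy: "e = {x, y}" "x \<noteq> y" by (metis simple_graph_edgeE simple)
    have cross: "e \<in> (\<lambda>x. {x, anchor x}) ` (attached \<inter> A)"
      if "s \<in> A" "t \<in> K" "e = {s, t}" for s t
    proof -
      have "s \<in> V - K" using that A by auto
      with that eE have "s \<in> attached" "anchor s = t" using anchor_eq by auto
      thus ?thesis using that by auto
    qed
    consider "x \<in> A" "y \<in> A" | "x \<in> K" "y \<in> K" | "x \<in> A" "y \<in> K" | "x \<in> K" "y \<in> A"
      using eAK xy by auto
    thus "e \<in> induced_edges E A \<union> clique_edges K \<union> (\<lambda>x. {x, anchor x}) ` (attached \<inter> A)"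
    proof cases
      case 1
      thus ?thesis using eE xy unfolding induced_edges_def by auto
    next
      case 2
      thus ?thesis using xy unfolding clique_edges_def by auto
    next
      case 3
      thus ?thesis using cross xy by blast
    next
      case 4
      thus ?thesis using cross[of y x] xy by (auto simp: insert_commute)
    qed
  qed
  show "induced_edges E A \<union> clique_edges K \<union> (\<lambda>x. {x, anchor x}) ` (attached \<inter> A)
      \<subseteq> induced_edges E (A \<union> K)"
    using K_clique anchor unfolding induced_edges_def clique_edges_def by auto
qed

lemma card_induced_edges_Un_K:
  assumes A: "A \<subseteq> V - K"
  shows "card (induced_edges E (A \<union> K)) = card (induced_edges E A) + 6 + card (attached \<inter> A)"
proof -
  let ?C = "(\<lambda>x. {x, anchor x}) ` (attached \<inter> A)"
  have fA: "finite A" using A finite_V finite_subset by blast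
  have d1: "induced_edges E A \<inter> clique_edges K = {}"
  proof (rule equals0I)
    fix e assume "e \<in> induced_edges E A \<inter> clique_edges K"
    hence "e \<subseteq> A \<inter> K" "card e = 2" unfolding induced_edges_def clique_edges_def by auto
    moreover have "A \<inter> K = {}" using A by auto
    ultimately show False by (metis card.empty subset_empty zero_neq_numeral)
  qed
  have d2: "(induced_edges E A \<union> clique_edges K) \<inter> ?C = {}"
  proof (rule equals0I)
    fix e assume "e \<in> (induced_edges E A \<union> clique_edges K) \<inter> ?C"
    then obtain x where x: "x \<in> attached" "x \<in> A" "{x, anchor x} \<subseteq> A \<or> {x, anchor x} \<subseteq> K"
      unfolding induced_edges_def clique_edges_def by auto
    thus False using anchor(1)[OF x(1)] A by auto
  qed
  have "inj_on (\<lambda>x. {x, anchor x}) (attached \<inter> A)"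
  proof (rule inj_onI)
    fix x y assume xy: "x \<in> attached \<inter> A" "y \<in> attached \<inter> A" "{x, anchor x} = {y, anchor y}"
    have "x \<notin> K" "y \<notin> K" "anchor x \<in> K" "anchor y \<in> K" using xy A anchor(1) by auto
    thus "x = y" using xy(3) by (metis doubleton_eq_iff)
  qed
  hence "card ?C = card (attached \<inter> A)" by (rule card_image)
  moreover have "finite (induced_edges E A)" "finite (clique_edges K)" "finite ?C"
    using finite_E finite_K fA by (auto simp: finite_induced_edges clique_edges_def)
  ultimately show ?thesis
    using induced_edges_Un_K[OF A] card_Un_disjoint[OF _ _ d1] card_Un_disjoint[OF _ _ d2]
      card_clique_K by simp
qed

lemma contracted_simple: "simple_graph (insert w (V - K)) contracted_edges"
  unfolding simple_graph_def
proof (rule conjI[OF _ ballI])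
  show "finite (insert w (V - K))" using finite_V by simp
  fix e assume "e \<in> contracted_edges"
  then consider "e \<in> E" "e \<subseteq> V - K" | x where "x \<in> attached" "e = {x, w}"
    unfolding contracted_edges_def induced_edges_def by auto
  thus "e \<subseteq> insert w (V - K) \<and> card e = 2"
  proof cases
    case 1
    thus ?thesis using simple unfolding simple_graph_def by auto
  next
    case (2 x)
    hence "x \<in> V - K" "x \<noteq> w" using attached_subset fresh by auto
    thus ?thesis using 2 by auto
  qed
qed

lemma contracted_sparse: "sparse22 (insert w (V - K)) contracted_edges"
proof (rule sparse22_insert_vertex[OF contracted_simple])
  show "w \<notin> V - K" using fresh by simp
next
  fix X assume X: "X \<subseteq> V - K" "X \<noteq> {}"
  have "induced_edges contracted_edges X = induced_edges E X"
    using X fresh unfolding contracted_edges_def induced_edges_def by auto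
  thus "int (card (induced_edges contracted_edges X)) \<le> 2 * int (card X) - 2"
    using sparse22D[OF sparse, of X] X by auto
next
  fix X assume X: "X \<subseteq> V - K" "X \<noteq> {}"
  have fX: "finite X" using X finite_V finite_subset by blast
  have "induced_edges contracted_edges (insert w X)
      \<subseteq> induced_edges E X \<union> (\<lambda>x. {x, w}) ` (attached \<inter> X)"
  proof
    fix e assume e: "e \<in> induced_edges contracted_edges (insert w X)"
    then consider "e \<in> E" "e \<subseteq> V - K" | x where "x \<in> attached" "e = {x, w}"
      unfolding contracted_edges_def induced_edges_def by auto
    thus "e \<in> induced_edges E X \<union> (\<lambda>x. {x, w}) ` (attached \<inter> X)"
    proof cases
      case 1
      thus ?thesis using e fresh unfolding induced_edges_def by auto
    next
      case (2 x)
      hence "x \<in> X" using e attached_subset fresh unfolding induced_edges_def by auto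
      thus ?thesis using 2 by auto
    qed
  qed
  hence "card (induced_edges contracted_edges (insert w X))
      \<le> card (induced_edges E X) + card ((\<lambda>x. {x, w}) ` (attached \<inter> X))"
    using fX by (intro card_subset_Un_le) (auto simp: finite_E finite_induced_edges)
  moreover have "card ((\<lambda>x. {x, w}) ` (attached \<inter> X)) \<le> card (attached \<inter> X)"
    by (rule card_image_le) (use fX in auto)
  moreover have "card (induced_edges E (X \<union> K)) = card (induced_edges E X) + 6 + card (attached \<inter> X)"
    by (rule card_induced_edges_Un_K[OF X(1)])
  moreover have "int (card (induced_edges E (X \<union> K))) \<le> 2 * int (card (X \<union> K)) - 2"
    by (rule sparse22D[OF sparse]) (use X K_subset in auto)
  moreover have "card (X \<union> K) = card X + 4"
    using card_Un_disjoint[OF fX finite_K] X card_K by auto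
  ultimately show "int (card (induced_edges contracted_edges (insert w X))) \<le> 2 * int (card X)"
    by linarith
qed

lemma card_contracted_edges: "card contracted_edges = card (induced_edges E (V - K)) + card attached"
proof -
  have "induced_edges E (V - K) \<inter> (\<lambda>x. {x, w}) ` attached = {}"
    using fresh unfolding induced_edges_def by auto
  moreover have "card ((\<lambda>x. {x, w}) ` attached) = card attached"
    by (rule card_image[OF inj_on_doubleton]) (use attached_subset fresh in auto)
  moreover have "finite attached" using attached_subset finite_V finite_subset by blast
  ultimately show ?thesis unfolding contracted_edges_def
    by (simp add: card_Un_disjoint finite_E finite_induced_edges)
qed

lemma contracted_tight: "tight_graph (insert w (V - K)) contracted_edges"
proof -
  have "card E = card (induced_edges E (V - K)) + 6 + card attached"
    using card_induced_edges_Un_K[of "V - K"] K_subset attached_subset induced_edges_all[OF simple]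
    by (simp add: Int_absorb2 Un_absorb2)
  moreover have "card (insert w (V - K)) + 3 = card V"
    using fresh finite_V card_Diff_subset[OF finite_K K_subset] card_mono[OF finite_V K_subset] card_K
    by simp
  ultimately show ?thesis
    using contracted_simple contracted_sparse card_contracted_edges edge_count
    unfolding tight_graph_def by simp
qed

lemma nbrs_contracted: "nbrs contracted_edges w = attached"
proof
  show "nbrs contracted_edges w \<subseteq> attached"
  proof
    fix y assume "y \<in> nbrs contracted_edges w"
    hence y: "{y, w} \<in> contracted_edges" unfolding nbrs_def by auto
    have "{y, w} \<notin> induced_edges E (V - K)" using fresh unfolding induced_edges_def by auto
    then obtain x where "x \<in> attached" "{y, w} = {x, w}" using y unfolding contracted_edges_def by auto
    moreover have "x \<noteq> w" using \<open>x \<in> attached\<close> attached_subset fresh by auto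
    ultimately show "y \<in> attached" by (metis doubleton_eq_iff)
  qed
  show "attached \<subseteq> nbrs contracted_edges w"
    unfolding nbrs_def contracted_edges_def by auto
qed

lemma reducible: "reducible V E"
  unfolding reducible_def
proof (intro exI[of _ "insert w (V - K)"] exI[of _ contracted_edges] conjI impI)
  have "card (insert w (V - K)) + 3 = card V"
    using fresh finite_V card_Diff_subset[OF finite_K K_subset] card_mono[OF finite_V K_subset] card_K
    by simp
  thus "card (insert w (V - K)) < card V" by linarith
  show "tight_graph (insert w (V - K)) contracted_edges" by (rule contracted_tight)
  assume "constructible (insert w (V - K)) contracted_edges"
  hence "constructible ((insert w (V - K) - {w}) \<union> K)
      ({e\<in>contracted_edges. w \<notin> e} \<union> {{k, k'} | k k'. k \<in> K \<and> k' \<in> K \<and> k \<noteq> k'}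
         \<union> {{x, anchor x} | x. x \<in> nbrs contracted_edges w})"
    using card_K K_subset fresh anchor(1) nbrs_contracted
    by (intro constructible.vertex_to_K4) auto
  moreover have "(insert w (V - K) - {w}) \<union> K = V" using K_subset fresh by auto
  moreover have "{e\<in>contracted_edges. w \<notin> e} = induced_edges E (V - K)"
    using fresh unfolding contracted_edges_def induced_edges_def by auto
  moreover have "{{x, anchor x} | x. x \<in> nbrs contracted_edges w} = (\<lambda>x. {x, anchor x}) ` attached"
    unfolding nbrs_contracted by auto
  moreover have "E = induced_edges E (V - K) \<union> clique_edges K \<union> (\<lambda>x. {x, anchor x}) ` attached"
    using induced_edges_Un_K[of "V - K"] K_subset attached_subset induced_edges_all[OF simple]
    by (simp add: Int_absorb2 Un_absorb2)
  ultimately show "constructible V E" by (simp add: clique_edges_eq)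
qed

end

context tight22
begin

lemma blocked_commute: "blocked u p q \<longleftrightarrow> blocked u q p"
  unfolding blocked_def by blast

lemma nbrs_triangle:
  assumes u: "u \<in> V" and N: "nbrs E u = {a, b, c}" and d: "a \<noteq> b" "a \<noteq> c" "b \<noteq> c"
    and linked: "\<And>p q r. nbrs E u = {p, q, r} \<Longrightarrow> p \<noteq> q \<Longrightarrow> p \<noteq> r \<Longrightarrow> q \<noteq> r \<Longrightarrow>
                   {p, q} \<in> E \<or> blocked u p q"
  shows "{a, b} \<in> E" "{a, c} \<in> E" "{b, c} \<in> E"
proof -
  have N': "nbrs E u = {a, c, b}" "nbrs E u = {b, c, a}" using N by auto
  have ab: "{a, b} \<in> E \<or> blocked u a b" and ac: "{a, c} \<in> E \<or> blocked u a c"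
    and bc: "{b, c} \<in> E \<or> blocked u b c"
    using linked[OF N d] linked[OF N'(1)] linked[OF N'(2)] d by auto
  have "\<not> blocked u a b" by (rule not_blocked_if_linked[OF u N d ac bc])
  moreover have "\<not> blocked u a c"
    using not_blocked_if_linked[OF u N'(1)] d ab bc
    by (auto simp: blocked_commute insert_commute)
  moreover have "\<not> blocked u b c"
    using not_blocked_if_linked[OF u N'(2)] d ab ac
    by (auto simp: blocked_commute insert_commute)
  ultimately show "{a, b} \<in> E" "{a, c} \<in> E" "{b, c} \<in> E" using ab ac bc by auto
qed

lemma tight_set_clique4:
  assumes "K \<subseteq> V" "card K = 4" "clique_edges K \<subseteq> E"
  shows "tight_set V E K"
proof -
  have "finite K" using assms(1) finite_V finite_subset by blast
  thus ?thesis
    using assms induced_edges_clique[OF assms(1,3)] card_clique_edges[of K]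
    unfolding tight_set_def by (auto simp: numeral_eq_Suc)
qed

lemma nbrs_Int_tight_set:
  assumes K: "tight_set V E K" and x: "x \<in> V" "x \<notin> K"
    and kk': "k \<in> K" "k' \<in> K" "k \<noteq> k'" and e: "{x, k} \<in> E" "{x, k'} \<in> E"
  shows "nbrs E x \<inter> K = {k, k'}"
proof -
  have sub: "{k, k'} \<subseteq> nbrs E x \<inter> K" using kk' e by (auto simp: in_nbrs_iff)
  have fin: "finite (nbrs E x \<inter> K)"
    using K finite_V finite_subset unfolding tight_set_def by blast
  have "card {k, k'} \<le> card (nbrs E x \<inter> K)" by (rule card_mono[OF fin sub])
  hence "card {k, k'} = card (nbrs E x \<inter> K)"
    using tight_set_insert_bound(1)[OF simple sparse K x] kk'(3) by simp
  thus ?thesis using card_subset_eq[OF fin sub] by simp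
qed

lemma reducible_outside_two_nbrs:
  assumes u: "u \<in> V" and N: "nbrs E u = {a, b, c}" and d: "a \<noteq> b" "a \<noteq> c" "b \<noteq> c"
    and K: "K = {u, a, b, c}" "clique_edges K \<subseteq> E"
    and x: "x \<in> V - K" and kk': "k \<in> K" "k' \<in> K" "k \<noteq> k'" and e: "{x, k} \<in> E" "{x, k'} \<in> E"
  shows "reducible V E"
proof -
  have KV: "K \<subseteq> V" "card K = 4" using K(1) N nbrs_subset_delete[of u] u d by auto
  have Nx: "nbrs E x \<inter> K = {k, k'}"
    using nbrs_Int_tight_set[OF tight_set_clique4[OF KV K(2)]] x kk' e by blast
  have "{x, u} \<notin> E" using x N in_nbrs_iff[of x E u] K(1) by (auto simp: insert_commute)
  hence "{k, k'} \<subseteq> {a, b, c}" using kk' e K(1) by auto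
  moreover have "\<not> {a, b, c} \<subseteq> {k, k'}"
  proof
    assume "{a, b, c} \<subseteq> {k, k'}"
    hence "card {a, b, c} \<le> card {k, k'}" by (rule card_mono[rotated]) simp
    thus False using d card_doubleton_le[of k k'] by simp
  qed
  then obtain r where r: "r \<in> {a, b, c}" "r \<notin> {k, k'}" by blast
  ultimately have sub3: "{k, k', r} \<subseteq> {a, b, c}" by auto
  have kr: "k \<noteq> r" "k' \<noteq> r" using r by auto
  have "card {k, k', r} = card {a, b, c}" using kk'(3) kr d by simp
  with card_subset_eq[OF _ sub3] have "{k, k', r} = {a, b, c}" by blast
  hence Nu: "nbrs E u = {k, k', r}" unfolding N by (rule sym)
  have rK: "r \<in> K" using r K(1) by auto
  hence "r \<notin> nbrs E x" using Nx r(2) by blast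
  hence xr: "{x, r} \<notin> E" by (simp add: in_nbrs_iff)
  have edge: "{s, t} \<in> E" if "s \<in> K" "t \<in> K" "s \<noteq> t" for s t
    using that K(2) unfolding clique_edges_def by auto
  have "x \<notin> {u, k, k', r}" using x kk' rK K(1) by auto
  thus ?thesis
    using reducible_4cycle[OF u Nu kk'(3) kr edge[OF kk'] edge[OF kk'(1) rK kr(1)]
        edge[OF kk'(2) rK kr(2)] e xr] by blast
qed

lemma reducible_triangle:
  assumes inf: "infinite (UNIV :: 'a set)" and u: "u \<in> V"
    and N: "nbrs E u = {a, b, c}" and d: "a \<noteq> b" "a \<noteq> c" "b \<noteq> c"
    and tri: "{a, b} \<in> E" "{a, c} \<in> E" "{b, c} \<in> E"
  shows "reducible V E"
proof -
  define K where "K = {u, a, b, c}"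
  have KV: "K \<subseteq> V" "card K = 4" using K_def N nbrs_subset_delete[of u] u d by auto
  have clique: "clique_edges K \<subseteq> E"
  proof
    fix e assume "e \<in> clique_edges K"
    then obtain s t where "e = {s, t}" "s \<noteq> t" "s \<in> K" "t \<in> K"
      unfolding clique_edges_def by (auto simp: card_2_iff)
    thus "e \<in> E" using tri nbrs_triple_edges[OF N] unfolding K_def
      by (auto simp: insert_commute)
  qed
  show ?thesis
  proof (cases "\<forall>x\<in>V - K. \<forall>k\<in>K. \<forall>k'\<in>K. {x, k} \<in> E \<longrightarrow> {x, k'} \<in> E \<longrightarrow> k = k'")
    case True
    obtain w where "w \<notin> V" using ex_new_if_finite[OF inf finite_V] by blast
    interpret K4_contraction V E K w
      using True KV clique \<open>w \<notin> V\<close> by unfold_locales auto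
    show ?thesis by (rule reducible)
  next
    case False
    then obtain x k k' where "x \<in> V - K" "k \<in> K" "k' \<in> K" "k \<noteq> k'" "{x, k} \<in> E" "{x, k'} \<in> E"
      by blast
    thus ?thesis by (rule reducible_outside_two_nbrs[OF u N d K_def clique])
  qed
qed

lemma reducible_degree_three:
  assumes inf: "infinite (UNIV :: 'a set)" and u: "u \<in> V" and deg: "card (nbrs E u) = 3"
  shows "reducible V E"
proof -
  obtain a b c where N: "nbrs E u = {a, b, c}" and d: "a \<noteq> b" "a \<noteq> c" "b \<noteq> c"
    using deg by (auto simp: card_3_iff)
  show ?thesis
  proof (cases "\<exists>p q r. nbrs E u = {p, q, r} \<and> p \<noteq> q \<and> p \<noteq> r \<and> q \<noteq> r \<and>
                        {p, q} \<notin> E \<and> \<not> blocked u p q")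
    case True
    thus ?thesis using reducible_henneberg2[OF u] by blast
  next
    case False
    hence "{a, b} \<in> E" "{a, c} \<in> E" "{b, c} \<in> E" using nbrs_triangle[OF u N d] by blast+
    thus ?thesis by (rule reducible_triangle[OF inf u N d])
  qed
qed

end

lemma (in tight22) reducible_if_two_vertices:
  assumes inf: "infinite (UNIV :: 'a set)" and V: "2 \<le> card V"
  shows "reducible V E"
proof -
  obtain u where u: "u \<in> V" "card (nbrs E u) \<le> 3" using exists_degree_le_three[OF V] by blast
  moreover have "2 \<le> card (nbrs E u)" by (rule degree_ge_two[OF V u(1)])
  ultimately consider "card (nbrs E u) = 2" | "card (nbrs E u) = 3" by linarith
  thus ?thesis
  proof cases
    case 1
    then obtain a b where "nbrs E u = {a, b}" "a \<noteq> b" by (auto simp: card_2_iff)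
    thus ?thesis by (rule reducible_degree_two[OF u(1)])
  next
    case 2
    thus ?thesis by (rule reducible_degree_three[OF inf u(1)])
  qed
qed

lemma constructible_if_tight_graph:
  assumes inf: "infinite (UNIV :: 'a set)"
  shows "tight_graph (V :: 'a set) E \<Longrightarrow> constructible V E"
proof (induction "card V" arbitrary: V E rule: less_induct)
  case less
  interpret tight22 V E by (rule tight22.intro[OF less.prems])
  show ?case
  proof (cases "2 \<le> card V")
    case True
    then obtain V' :: "'a set" and E' where "card V' < card V" "tight_graph V' E'"
      "constructible V' E' \<longrightarrow> constructible V E"
      using reducible_if_two_vertices[OF inf] unfolding reducible_def by blast
    thus ?thesis using less.hyps by blast
  next
    case False
    hence "card V = 1" using edge_count by linarith
    then obtain v where v: "V = {v}" by (auto simp: card_1_singleton_iff)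
    have "E = induced_edges E V" by (rule induced_edges_all[OF simple, symmetric])
    also have "\<dots> = {}" using induced_edges_singleton[OF simple] v by simp
    finally show ?thesis using v constructible.K1 by simp
  qed
qed

theorem theorem3p1:
  fixes V :: "'a set" and E :: "'a set set"
  assumes "infinite (UNIV :: 'a set)"
    and "simple_graph V E"
  shows "tight 2 2 V E \<longleftrightarrow> constructible V E"
  using constructible_if_tight_graph[OF assms(1)] tight_graph_if_constructible
    tight_22_iff[OF assms(2)] by blast

end
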